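(* Let $F:\mathbb{R}^p\to[0,M]$ and $\mathbf{r}=(\mathbf{r}_1,\dots,\mathbf{r}_Z):\mathbb{R}^p\to\mathbb{R}^Z$ be functions, let $B>0$, and let $\Lambda=\{\boldsymbol{\lambda}\in\mathbb{R}_+^{Z}:\|\boldsymbol{\lambda}\|_1\le B\}$. Define $G(w;\boldsymbol{\lambda})=F(w)+\boldsymbol{\lambda}^T\mathbf{r}(w)$ for $w\in\mathbb{R}^p$, $\boldsymbol{\lambda}\in\Lambda$. Let $\nu\ge 0$ and let $(\bar w,\bar{\boldsymbol{\lambda}})\in\mathbb{R}^p\times\Lambda$ be a $\nu$-approximate saddle point of $G$, i.e. $G(\bar w;\bar{\boldsymbol{\lambda}})\le G(w;\bar{\boldsymbol{\lambda}})+\nu$ for all $w\in\mathbb{R}^p$ and $G(\bar w;\bar{\boldsymbol{\lambda}})\ge G(\bar w;\boldsymbol{\lambda})-\nu$ for all $\boldsymbol{\lambda}\in\Lambda$. Assume there exists $w^*\in\mathbb{R}^p$ with $\mathbf{r}(w^* )\le \mathbf{0}_Z$ componentwise. Then $$\max_{1\le j\le Z}\,(\mathbf{r}_j(\bar w))_+\le \frac{M+2\nu}{B},$$ where $x_+=\max\{x,0\}$.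
   Context: In the paper, $F(w)=\frac1K\sum_{k=1}^K\frac1{m_k}\sum_{i=1}^{m_k} l(h_w(x_{k,i}),y_{k,i})$ is the empirical federated risk of a model with parameter $w$ (a nonnegative loss, assumed bounded by $M$), and $\mathbf{r}(w)\le 0$ encodes group-fairness constraints such as Bounded Group Loss; the Lagrangian-type objective is minimized over $w$ and maximized over $\boldsymbol{\lambda}$. *)

theory Defs
  imports "HOL-Analysis.Analysis"
begin

definition dual_set :: "real \<Rightarrow> (real ^ 'z) set" where
  "dual_set B = {l. (\<forall>j. 0 \<le> l $ j) \<and> (\<Sum>j\<in>UNIV. \<bar>l $ j\<bar>) \<le> B}"

definition lagr :: "('p \<Rightarrow> real) \<Rightarrow> ('p \<Rightarrow> real ^ 'z) \<Rightarrow> 'p \<Rightarrow> real ^ 'z \<Rightarrow> real" where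
  "lagr F r w l = F w + l \<bullet> r w"

end

theory Submission
  imports Defs
begin

text \<open>Testing the dual optimality of \<open>lbar\<close> against the extreme point \<open>B e\<^sub>j\<close> of the dual set
  gives \<open>F wbar + B r\<^sub>j(wbar) - \<nu> \<le> G(wbar; lbar)\<close>, while primal optimality of \<open>wbar\<close>,
  tested against a feasible \<open>w\<^sup>*\<close>, gives \<open>G(wbar; lbar) \<le> F w\<^sup>* + \<nu> \<le> M + \<nu>\<close>.
  Since \<open>F \<ge> 0\<close>, this leaves \<open>B r\<^sub>j(wbar) \<le> M + 2\<nu>\<close>.\<close>

lemma dual_set_nonneg: "l \<in> dual_set B \<Longrightarrow> 0 \<le> l $ j"
  by (simp add: dual_set_def)

lemma axis_in_dual_set:
  fixes B :: real
  assumes "0 \<le> B"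
  shows "axis j B \<in> dual_set B"
proof -
  have "(\<Sum>i\<in>UNIV. \<bar>axis j B $ i\<bar>) = (\<Sum>i\<in>UNIV. if i = j then B else 0)"
    using assms by (intro sum.cong) (auto simp: axis_def)
  then show ?thesis
    using assms by (simp add: dual_set_def axis_def)
qed

lemma inner_nonpos_if_nonneg_nonpos:
  fixes l x :: "real ^ 'n"
  assumes "\<And>j. 0 \<le> l $ j" and "\<And>j. x $ j \<le> 0"
  shows "l \<bullet> x \<le> 0"
  unfolding inner_vec_def using assms by (auto intro!: sum_nonpos simp: mult_nonneg_nonpos)

lemma lagr_le_if_feasible:
  assumes "\<And>j. 0 \<le> l $ j" and "\<And>j. r w $ j \<le> 0"
  shows "lagr F r w l \<le> F w"
  using inner_nonpos_if_nonneg_nonpos[OF assms] by (simp add: lagr_def)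

lemma lagr_axis: "lagr F r w (axis j c) = F w + c * r w $ j"
  by (simp add: lagr_def inner_axis')

theorem lemma1:
  fixes F :: "real ^ 'p \<Rightarrow> real"
    and r :: "real ^ 'p \<Rightarrow> real ^ 'z"
    and M B \<nu> :: real
    and wbar :: "real ^ 'p" and lbar :: "real ^ 'z"
  assumes F_range: "\<And>w. 0 \<le> F w \<and> F w \<le> M"
    and B_pos: "B > 0"
    and nu_nonneg: "\<nu> \<ge> 0"
    and lbar_in: "lbar \<in> dual_set B"
    and saddle_w: "\<And>w. lagr F r wbar lbar \<le> lagr F r w lbar + \<nu>"
    and saddle_l: "\<And>l. l \<in> dual_set B \<Longrightarrow> lagr F r wbar lbar \<ge> lagr F r wbar l - \<nu>"
    and feasible: "\<exists>wstar. \<forall>j. r wstar $ j \<le> 0"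
  shows "(MAX j\<in>UNIV. max (r wbar $ j) 0) \<le> (M + 2 * \<nu>) / B"
proof -
  obtain wstar where wstar: "\<And>j. r wstar $ j \<le> 0"
    using feasible by blast
  have "lagr F r wstar lbar \<le> F wstar"
    using dual_set_nonneg[OF lbar_in] wstar by (rule lagr_le_if_feasible)
  then have saddle_value_le: "lagr F r wbar lbar \<le> M + \<nu>"
    using saddle_w[of wstar] F_range[of wstar] by linarith
  have "0 \<le> M"
    using F_range[of wstar] by linarith
  have "max (r wbar $ j) 0 \<le> (M + 2 * \<nu>) / B" for j
  proof -
    have "F wbar + B * r wbar $ j - \<nu> \<le> lagr F r wbar lbar"
      using saddle_l[OF axis_in_dual_set[of B j]] B_pos by (simp add: lagr_axis)
    then have "B * r wbar $ j \<le> M + 2 * \<nu>"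
      using saddle_value_le F_range[of wbar] by linarith
    then have "r wbar $ j \<le> (M + 2 * \<nu>) / B"
      using B_pos by (simp add: field_simps)
    moreover have "0 \<le> (M + 2 * \<nu>) / B"
      using \<open>0 \<le> M\<close> nu_nonneg B_pos by simp
    ultimately show ?thesis
      by simp
  qed
  then show ?thesis
    by (simp add: Max_le_iff)
qed

end
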